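(* Let $\Phi=\{\varphi_i\}_{i\in\Lambda}$ be a similarity IFS in $\mathbb{R}^d$ and let $F\subset\mathbb{R}^d$ be a nonempty compact set with $\varphi_iF\subseteq F$ for every $i\in\Lambda$. Then $\Phi$ is $(F,c)$-diffuse for some $c>0$ if and only if for every affine hyperplane $\mathcal{L}\subseteq\mathbb{R}^d$ there exists $i\in\Lambda$ with $\varphi_iF\cap\mathcal{L}=\emptyset$.
   Context: A similarity IFS is a finite family of contracting similarities of $\mathbb{R}^d$. $\Phi$ is $(F,c)$-diffuse if for every affine hyperplane $\mathcal{L}$ there is $i\in\Lambda$ with $\varphi_iF\cap\mathcal{L}^{(c)}=\emptyset$, $\mathcal{L}^{(c)}$ denoting the open $c$-neighborhood of $\mathcal{L}$. *)

theory Defs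
  imports "HOL-Analysis.Analysis"
begin

definition similarity_with_ratio :: "('a::euclidean_space \<Rightarrow> 'a) \<Rightarrow> real \<Rightarrow> bool" where
  "similarity_with_ratio f r \<longleftrightarrow> (\<forall>x y. dist (f x) (f y) = r * dist x y)"

definition contracting_similarity :: "('a::euclidean_space \<Rightarrow> 'a) \<Rightarrow> bool" where
  "contracting_similarity f \<longleftrightarrow> (\<exists>r. 0 < r \<and> r < 1 \<and> similarity_with_ratio f r)"

definition similarity_IFS :: "'i set \<Rightarrow> ('i \<Rightarrow> 'a::euclidean_space \<Rightarrow> 'a) \<Rightarrow> bool" where
  "similarity_IFS \<Lambda> \<phi> \<longleftrightarrow> finite \<Lambda> \<and> \<Lambda> \<noteq> {} \<and> (\<forall>i\<in>\<Lambda>. contracting_similarity (\<phi> i))"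

definition affine_hyperplane :: "'a::euclidean_space set \<Rightarrow> bool" where
  "affine_hyperplane L \<longleftrightarrow> (\<exists>a b. a \<noteq> 0 \<and> L = {x. a \<bullet> x = b})"

definition open_nbhd :: "'a::euclidean_space set \<Rightarrow> real \<Rightarrow> 'a set" where
  "open_nbhd L c = {x. \<exists>y\<in>L. dist x y < c}"

definition diffuse :: "'i set \<Rightarrow> ('i \<Rightarrow> 'a::euclidean_space \<Rightarrow> 'a) \<Rightarrow> 'a set \<Rightarrow> real \<Rightarrow> bool" where
  "diffuse \<Lambda> \<phi> F c \<longleftrightarrow>
     (\<forall>L. affine_hyperplane L \<longrightarrow> (\<exists>i\<in>\<Lambda>. \<phi> i ` F \<inter> open_nbhd L c = {}))"

end

theory Submission
  imports Defs
begin

text \<open>Writing hyperplanes with unit normals, the open \<open>c\<close>-neighbourhood of \<open>{x. a \<bullet> x = b}\<close>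
  is the slab \<open>\<bar>a \<bullet> x - b\<bar> < c\<close>, so both conditions become statements about the numbers
  \<open>\<bar>a \<bullet> x - b\<bar>\<close> with \<open>x \<in> \<phi>\<^sub>i F\<close>. Diffuseness trivially implies avoidance. Conversely, if no
  \<open>c > 0\<close> works, there are unit-normal hyperplanes whose \<open>1/n\<close>-slabs meet every \<open>\<phi>\<^sub>i F\<close>; they lie
  in a compact family since \<open>F\<close> is bounded, and a limit hyperplane meets every compact set
  \<open>\<phi>\<^sub>i F\<close>, contradicting avoidance.\<close>

lemma contracting_similarity_continuous_on:
  assumes "contracting_similarity f"
  shows "continuous_on S f"
proof -
  obtain r where "0 < r" "similarity_with_ratio f r"
    using assms unfolding contracting_similarity_def by blast
  then have "r-lipschitz_on S f"
    by (simp add: lipschitz_on_def similarity_with_ratio_def)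
  then show ?thesis
    by (rule lipschitz_on_continuous_on)
qed

lemma affine_hyperplane_iff_unit_normal:
  "affine_hyperplane L \<longleftrightarrow> (\<exists>a b. norm a = 1 \<and> L = {x. a \<bullet> x = b})"
proof
  assume "affine_hyperplane L"
  then obtain a b where "a \<noteq> 0" "L = {x. a \<bullet> x = b}"
    unfolding affine_hyperplane_def by blast
  moreover from \<open>a \<noteq> 0\<close> have "a \<bullet> x = b \<longleftrightarrow> (a /\<^sub>R norm a) \<bullet> x = b / norm a" for x
    by (simp add: field_simps)
  ultimately show "\<exists>a b. norm a = 1 \<and> L = {x. a \<bullet> x = b}"
    by (intro exI[of _ "a /\<^sub>R norm a"] exI[of _ "b / norm a"]) auto
next
  assume "\<exists>a b. norm a = 1 \<and> L = {x. a \<bullet> x = b}"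
  then show "affine_hyperplane L"
    unfolding affine_hyperplane_def by (metis norm_zero zero_neq_one)
qed

lemma all_affine_hyperplane_iff_unit_normal:
  "(\<forall>L. affine_hyperplane L \<longrightarrow> P L) \<longleftrightarrow> (\<forall>a b. norm a = 1 \<longrightarrow> P {x. a \<bullet> x = b})"
  unfolding affine_hyperplane_iff_unit_normal by blast

lemma open_nbhd_unit_hyperplane:
  fixes a :: "'a::euclidean_space"
  assumes "norm a = 1"
  shows "open_nbhd {x. a \<bullet> x = b} c = {x. \<bar>a \<bullet> x - b\<bar> < c}"
proof (intro set_eqI iffI)
  fix x
  assume "x \<in> open_nbhd {x. a \<bullet> x = b} c"
  then obtain y where "a \<bullet> y = b" "dist x y < c"
    unfolding open_nbhd_def by blast
  then have "\<bar>a \<bullet> x - b\<bar> = \<bar>a \<bullet> (x - y)\<bar>"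
    by (simp add: inner_diff_right)
  also have "\<dots> \<le> norm (x - y)"
    using Cauchy_Schwarz_ineq2[of a "x - y"] assms by simp
  finally show "x \<in> {x. \<bar>a \<bullet> x - b\<bar> < c}"
    using \<open>dist x y < c\<close> by (simp add: dist_norm)
next
  fix x
  assume "x \<in> {x. \<bar>a \<bullet> x - b\<bar> < c}"
  define y where "y = x - (a \<bullet> x - b) *\<^sub>R a"
  have "a \<bullet> a = 1"
    using assms by (simp add: dot_square_norm)
  then have "a \<bullet> y = b"
    unfolding y_def by (simp add: inner_diff_right)
  moreover have "dist x y = \<bar>a \<bullet> x - b\<bar>"
    unfolding y_def using assms by (simp add: dist_norm)
  ultimately show "x \<in> open_nbhd {x. a \<bullet> x = b} c"
    unfolding open_nbhd_def using \<open>x \<in> {x. \<bar>a \<bullet> x - b\<bar> < c}\<close> by auto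
qed

lemma diffuse_iff_unit_normal:
  fixes \<phi> :: "'i \<Rightarrow> 'a::euclidean_space \<Rightarrow> 'a"
  shows "diffuse \<Lambda> \<phi> F c \<longleftrightarrow>
     (\<forall>a b. norm a = 1 \<longrightarrow> (\<exists>i\<in>\<Lambda>. \<forall>x\<in>\<phi> i ` F. c \<le> \<bar>a \<bullet> x - b\<bar>))"
proof -
  have "S \<inter> {x. \<bar>a \<bullet> x - b\<bar> < c} = {} \<longleftrightarrow> (\<forall>x\<in>S. c \<le> \<bar>a \<bullet> x - b\<bar>)" for S and a :: 'a and b
    by (auto simp: not_less)
  then show ?thesis
    unfolding diffuse_def all_affine_hyperplane_iff_unit_normal
    by (simp add: open_nbhd_unit_hyperplane)
qed

lemma avoids_hyperplanes_iff_unit_normal: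
  fixes K :: "'i \<Rightarrow> 'a::euclidean_space set"
  shows "(\<forall>L. affine_hyperplane L \<longrightarrow> (\<exists>i\<in>\<Lambda>. K i \<inter> L = {})) \<longleftrightarrow>
     (\<forall>a b. norm a = 1 \<longrightarrow> (\<exists>i\<in>\<Lambda>. \<forall>x\<in>K i. a \<bullet> x \<noteq> b))"
proof -
  have "S \<inter> {x. a \<bullet> x = b} = {} \<longleftrightarrow> (\<forall>x\<in>S. a \<bullet> x \<noteq> b)" for S and a :: 'a and b
    by auto
  then show ?thesis
    unfolding all_affine_hyperplane_iff_unit_normal by simp
qed

lemma compact_meets_limit_hyperplane:
  fixes x :: "nat \<Rightarrow> 'a::euclidean_space"
  assumes "compact K" "\<And>n. x n \<in> K"
    and "A \<longlonglongrightarrow> a" "B \<longlonglongrightarrow> b" "(\<lambda>n. A n \<bullet> x n - B n) \<longlonglongrightarrow> 0"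
  shows "\<exists>y\<in>K. a \<bullet> y = b"
proof -
  obtain y s where "y \<in> K" "strict_mono s" "(x \<circ> s) \<longlonglongrightarrow> y"
    using assms(1,2) unfolding compact_def seq_compact_def by meson
  then have "(\<lambda>n. A (s n) \<bullet> x (s n) - B (s n)) \<longlonglongrightarrow> a \<bullet> y - b"
    using LIMSEQ_subseq_LIMSEQ[OF assms(3)] LIMSEQ_subseq_LIMSEQ[OF assms(4)]
    by (intro tendsto_intros) (auto simp: o_def)
  moreover have "(\<lambda>n. A (s n) \<bullet> x (s n) - B (s n)) \<longlonglongrightarrow> 0"
    using LIMSEQ_subseq_LIMSEQ[OF assms(5) \<open>strict_mono s\<close>] by (simp add: o_def)
  ultimately have "a \<bullet> y - b = 0"
    by (rule LIMSEQ_unique)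
  with \<open>y \<in> K\<close> show ?thesis
    by auto
qed

lemma uniform_hyperplane_avoidance:
  fixes K :: "'i \<Rightarrow> 'a::euclidean_space set"
  assumes compact: "\<And>i. i \<in> \<Lambda> \<Longrightarrow> compact (K i)"
    and bounded: "bounded (\<Union>i\<in>\<Lambda>. K i)"
    and avoid: "\<And>a b. norm a = 1 \<Longrightarrow> \<exists>i\<in>\<Lambda>. \<forall>x\<in>K i. a \<bullet> x \<noteq> b"
  shows "\<exists>c>0. \<forall>a b. norm a = 1 \<longrightarrow> (\<exists>i\<in>\<Lambda>. \<forall>x\<in>K i. c \<le> \<bar>a \<bullet> x - b\<bar>)"
proof (rule ccontr)
  assume no_uniform_bound: "\<not> ?thesis"
  have "\<exists>a b X. norm a = 1 \<and>
      (\<forall>i\<in>\<Lambda>. X i \<in> K i \<and> \<bar>a \<bullet> X i - b\<bar> < inverse (real (Suc n)))" for n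
  proof -
    have "inverse (real (Suc n)) > 0"
      by simp
    with no_uniform_bound obtain a b where "norm a = 1"
        and "\<not> (\<exists>i\<in>\<Lambda>. \<forall>x\<in>K i. inverse (real (Suc n)) \<le> \<bar>a \<bullet> x - b\<bar>)"
      by blast
    then have "\<forall>i\<in>\<Lambda>. \<exists>x\<in>K i. \<bar>a \<bullet> x - b\<bar> < inverse (real (Suc n))"
      by (simp add: not_le)
    then obtain X where "\<forall>i\<in>\<Lambda>. X i \<in> K i \<and> \<bar>a \<bullet> X i - b\<bar> < inverse (real (Suc n))"
      by metis
    with \<open>norm a = 1\<close> show ?thesis
      by blast
  qed
  then obtain A B X where unit: "\<And>n. norm (A n) = 1"
    and close: "\<And>n i. i \<in> \<Lambda> \<Longrightarrow> X n i \<in> K i \<and> \<bar>A n \<bullet> X n i - B n\<bar> < inverse (real (Suc n))"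
    by metis
  obtain R where R: "\<And>i x. i \<in> \<Lambda> \<Longrightarrow> x \<in> K i \<Longrightarrow> norm x \<le> R"
    using bounded unfolding bounded_iff by blast
  obtain u :: 'a where "norm u = 1"
    using vector_choose_size zero_le_one by blast
  then obtain i0 where "i0 \<in> \<Lambda>"
    using avoid by blast
  have "\<bar>B n\<bar> \<le> R + 1" for n
  proof -
    have "\<bar>A n \<bullet> X n i0\<bar> \<le> norm (A n) * norm (X n i0)"
      by (rule Cauchy_Schwarz_ineq2)
    also have "\<dots> \<le> R"
      using unit R close \<open>i0 \<in> \<Lambda>\<close> by simp
    moreover have "inverse (real (Suc n)) \<le> 1"
      by (simp add: inverse_le_1_iff)
    ultimately show ?thesis
      using close[OF \<open>i0 \<in> \<Lambda>\<close>, of n] by linarith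
  qed
  then have "(A n, B n) \<in> sphere 0 1 \<times> cball 0 (R + 1)" for n
    using unit by simp
  moreover have "compact (sphere (0::'a) 1 \<times> cball (0::real) (R + 1))"
    by (intro compact_Times compact_sphere compact_cball)
  ultimately obtain l r where "l \<in> sphere 0 1 \<times> cball 0 (R + 1)" "strict_mono r"
      and "((\<lambda>n. (A n, B n)) \<circ> r) \<longlonglongrightarrow> l"
    unfolding compact_def seq_compact_def by meson
  obtain a b where "l = (a, b)"
    by (cases l)
  have "norm a = 1"
    using \<open>l \<in> sphere 0 1 \<times> cball 0 (R + 1)\<close> \<open>l = (a, b)\<close> by simp
  have "(\<lambda>n. A (r n)) \<longlonglongrightarrow> a" "(\<lambda>n. B (r n)) \<longlonglongrightarrow> b"
    using tendsto_fst[OF \<open>_ \<longlonglongrightarrow> l\<close>] tendsto_snd[OF \<open>_ \<longlonglongrightarrow> l\<close>] \<open>l = (a, b)\<close>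
    by (simp_all add: o_def)
  obtain i where "i \<in> \<Lambda>" and i: "\<forall>x\<in>K i. a \<bullet> x \<noteq> b"
    using avoid[OF \<open>norm a = 1\<close>] by blast
  have "(\<lambda>n. inverse (real (Suc (r n)))) \<longlonglongrightarrow> 0"
    using LIMSEQ_subseq_LIMSEQ[OF LIMSEQ_inverse_real_of_nat \<open>strict_mono r\<close>] by (simp add: o_def)
  then have slab_limit: "(\<lambda>n. A (r n) \<bullet> X (r n) i - B (r n)) \<longlonglongrightarrow> 0"
    by (rule Lim_null_comparison[rotated])
      (use close[OF \<open>i \<in> \<Lambda>\<close>] in \<open>auto intro: always_eventually less_imp_le\<close>)
  have "X (r n) i \<in> K i" for n
    using close[OF \<open>i \<in> \<Lambda>\<close>] by blast
  then obtain y where "y \<in> K i" "a \<bullet> y = b"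
    using compact_meets_limit_hyperplane[OF compact[OF \<open>i \<in> \<Lambda>\<close>] _
        \<open>(\<lambda>n. A (r n)) \<longlonglongrightarrow> a\<close> \<open>(\<lambda>n. B (r n)) \<longlonglongrightarrow> b\<close> slab_limit]
    by blast
  with i show False
    by blast
qed

lemma open_nbhd_superset: "0 < c \<Longrightarrow> L \<subseteq> open_nbhd L c"
  unfolding open_nbhd_def by force

lemma diffuse_imp_avoids_hyperplanes:
  fixes \<phi> :: "'i \<Rightarrow> 'a::euclidean_space \<Rightarrow> 'a"
  assumes "0 < c" "diffuse \<Lambda> \<phi> F c"
  shows "\<forall>L. affine_hyperplane L \<longrightarrow> (\<exists>i\<in>\<Lambda>. \<phi> i ` F \<inter> L = {})"
proof (intro allI impI)
  fix L :: "'a set"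
  assume "affine_hyperplane L"
  with assms(2) obtain i where "i \<in> \<Lambda>" "\<phi> i ` F \<inter> open_nbhd L c = {}"
    unfolding diffuse_def by blast
  with open_nbhd_superset[OF assms(1), of L] show "\<exists>i\<in>\<Lambda>. \<phi> i ` F \<inter> L = {}"
    by blast
qed

lemma avoids_hyperplanes_imp_diffuse:
  fixes \<phi> :: "'i \<Rightarrow> 'a::euclidean_space \<Rightarrow> 'a"
  assumes "\<And>i. i \<in> \<Lambda> \<Longrightarrow> compact (\<phi> i ` F)" "bounded (\<Union>i\<in>\<Lambda>. \<phi> i ` F)"
    and "\<forall>L. affine_hyperplane L \<longrightarrow> (\<exists>i\<in>\<Lambda>. \<phi> i ` F \<inter> L = {})"
  shows "\<exists>c>0. diffuse \<Lambda> \<phi> F c"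
proof -
  have "\<forall>a b. norm a = 1 \<longrightarrow> (\<exists>i\<in>\<Lambda>. \<forall>x\<in>\<phi> i ` F. a \<bullet> x \<noteq> b)"
    using assms(3) unfolding avoids_hyperplanes_iff_unit_normal .
  from uniform_hyperplane_avoidance[OF assms(1,2) this[rule_format]] show ?thesis
    unfolding diffuse_iff_unit_normal .
qed

theorem proposition3p10:
  fixes \<Lambda> :: "'i set" and \<phi> :: "'i \<Rightarrow> 'a::euclidean_space \<Rightarrow> 'a" and F :: "'a set"
  assumes "similarity_IFS \<Lambda> \<phi>"
    and "compact F" and "F \<noteq> {}"
    and "\<forall>i\<in>\<Lambda>. \<phi> i ` F \<subseteq> F"
  shows "(\<exists>c>0. diffuse \<Lambda> \<phi> F c) \<longleftrightarrow>
         (\<forall>L. affine_hyperplane L \<longrightarrow> (\<exists>i\<in>\<Lambda>. \<phi> i ` F \<inter> L = {}))"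
proof -
  have compact: "compact (\<phi> i ` F)" if "i \<in> \<Lambda>" for i
  proof -
    have "contracting_similarity (\<phi> i)"
      using assms(1) that unfolding similarity_IFS_def by blast
    then show ?thesis
      by (intro compact_continuous_image contracting_similarity_continuous_on \<open>compact F\<close>)
  qed
  have "(\<Union>i\<in>\<Lambda>. \<phi> i ` F) \<subseteq> F"
    using assms(4) by blast
  then have bounded: "bounded (\<Union>i\<in>\<Lambda>. \<phi> i ` F)"
    by (rule bounded_subset[OF compact_imp_bounded[OF \<open>compact F\<close>]])
  show ?thesis
  proof
    assume "\<exists>c>0. diffuse \<Lambda> \<phi> F c"
    then show "\<forall>L. affine_hyperplane L \<longrightarrow> (\<exists>i\<in>\<Lambda>. \<phi> i ` F \<inter> L = {})"
      using diffuse_imp_avoids_hyperplanes by blast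
  qed (rule avoids_hyperplanes_imp_diffuse[OF compact bounded])
qed

end
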